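(* Let $G$ be a connected bipartite graph with bipartition $(A,B)$, with $|A|,|B|\ge2$, that admits no 1-join. Then there exists $a\in A$ such that $G\setminus N[a]$ is connected.
   Context: $N[a]$ is the set consisting of $a$ and its neighbours. $G$ admits a 1-join $(V_1,V_2)$ if $(V_1,V_2)$ is a partition of $V(G)$ with $|V_1|,|V_2|\ge2$ and there are $X_1\subseteq V_1$, $X_2\subseteq V_2$ such that $X_1$ is complete to $X_2$ and there are no other edges between $V_1$ and $V_2$. *)

theory Defs
  imports Main
begin

definition graph :: "'a set \<Rightarrow> ('a \<Rightarrow> 'a \<Rightarrow> bool) \<Rightarrow> bool" where
  "graph V E \<longleftrightarrow> finite V \<and> (\<forall>x y. E x y \<longrightarrow> x \<in> V \<and> y \<in> V \<and> x \<noteq> y \<and> E y x)"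

definition connected_on :: "('a \<Rightarrow> 'a \<Rightarrow> bool) \<Rightarrow> 'a set \<Rightarrow> bool" where
  "connected_on E S \<longleftrightarrow> (\<forall>x\<in>S. \<forall>y\<in>S. (\<lambda>u v. u \<in> S \<and> v \<in> S \<and> E u v)\<^sup>*\<^sup>* x y)"

definition bipartition :: "'a set \<Rightarrow> ('a \<Rightarrow> 'a \<Rightarrow> bool) \<Rightarrow> 'a set \<Rightarrow> 'a set \<Rightarrow> bool" where
  "bipartition V E A B \<longleftrightarrow> A \<union> B = V \<and> A \<inter> B = {} \<and>
     (\<forall>x y. E x y \<longrightarrow> (x \<in> A \<and> y \<in> B) \<or> (x \<in> B \<and> y \<in> A))"

definition closed_nbhd :: "'a set \<Rightarrow> ('a \<Rightarrow> 'a \<Rightarrow> bool) \<Rightarrow> 'a \<Rightarrow> 'a set" where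
  "closed_nbhd V E a = insert a {x \<in> V. E a x}"

definition is_1_join :: "'a set \<Rightarrow> ('a \<Rightarrow> 'a \<Rightarrow> bool) \<Rightarrow> 'a set \<Rightarrow> 'a set \<Rightarrow> bool" where
  "is_1_join V E V1 V2 \<longleftrightarrow> V1 \<union> V2 = V \<and> V1 \<inter> V2 = {} \<and> card V1 \<ge> 2 \<and> card V2 \<ge> 2 \<and>
     (\<exists>X1 X2. X1 \<subseteq> V1 \<and> X2 \<subseteq> V2 \<and>
        (\<forall>x\<in>V1. \<forall>y\<in>V2. E x y \<longleftrightarrow> x \<in> X1 \<and> y \<in> X2))"

definition admits_1_join :: "'a set \<Rightarrow> ('a \<Rightarrow> 'a \<Rightarrow> bool) \<Rightarrow> bool" where
  "admits_1_join V E \<longleftrightarrow> (\<exists>V1 V2. is_1_join V E V1 V2)"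

end

theory Submission
  imports Defs
begin

text \<open>Suppose every \<open>G \ N[a]\<close> with \<open>a \<in> A\<close> is disconnected. Among all pairs \<open>(a, C)\<close>
  with \<open>a \<in> A\<close> and \<open>C\<close> a nonempty connected set of vertices avoiding \<open>N[a]\<close>, choose one with
  \<open>|C|\<close> maximal. Then \<open>C\<close> is a component of \<open>G \ N[a]\<close>, and since \<open>G \ N[a]\<close> is disconnected
  some vertex \<open>d\<close> lies outside \<open>C \<union> N[a]\<close>. Let \<open>Y\<close> be the set of neighbours of \<open>a\<close> that have a
  neighbour in \<open>C\<close>; it is nonempty because \<open>G\<close> is connected. If some \<open>d \<in> A\<close> outside
  \<open>C \<union> N[a]\<close> missed some \<open>y \<in> Y\<close>, then \<open>C \<union> {y, a}\<close> would be a larger connected set avoiding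
  \<open>N[d]\<close>. So every such \<open>d\<close> is complete to \<open>Y\<close>, and \<open>(C \<union> Y, V - (C \<union> Y))\<close> is a 1-join with
  \<open>X\<^sub>1 = Y\<close> and \<open>X\<^sub>2\<close> the vertices of \<open>A\<close> on the second side.\<close>

lemma connected_on_singleton: "connected_on E {v}"
  unfolding connected_on_def by auto

lemma connected_on_insert:
  assumes "connected_on E C" "c \<in> C" "E c v" "E v c"
  shows "connected_on E (insert v C)"
proof -
  let ?R = "\<lambda>u w. u \<in> insert v C \<and> w \<in> insert v C \<and> E u w"
  have "(\<lambda>u w. u \<in> C \<and> w \<in> C \<and> E u w) \<le> ?R"
    by auto
  then have in_C: "?R\<^sup>*\<^sup>* x y" if "x \<in> C" "y \<in> C" for x y
    using assms(1) that rtranclp_mono unfolding connected_on_def by blast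
  have to_c: "?R\<^sup>*\<^sup>* x c" if "x \<in> insert v C" for x
    using that in_C[OF _ assms(2)] assms(2,4) by auto
  have from_c: "?R\<^sup>*\<^sup>* c y" if "y \<in> insert v C" for y
    using that in_C[OF assms(2)] assms(2,3) by auto
  show ?thesis
    unfolding connected_on_def using to_c from_c by (meson rtranclp_trans)
qed

lemma rtranclp_closed_set:
  assumes "R\<^sup>*\<^sup>* x y" "x \<in> S" "\<And>u w. u \<in> S \<Longrightarrow> R u w \<Longrightarrow> w \<in> S"
  shows "y \<in> S"
  using assms by (induction rule: rtranclp_induct) auto

locale simple_graph =
  fixes V :: "'a set" and E :: "'a \<Rightarrow> 'a \<Rightarrow> bool"
  assumes graph: "graph V E"
begin

lemma finite_vertices: "finite V"
  using graph unfolding graph_def by blast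

lemma edge_vertices: "E x y \<Longrightarrow> x \<in> V \<and> y \<in> V"
  using graph unfolding graph_def by blast

lemma edge_sym: "E x y \<Longrightarrow> E y x"
  using graph unfolding graph_def by blast

lemma edge_irrefl: "\<not> E x x"
  using graph unfolding graph_def by blast

lemma closed_nbhd_iff: "x \<in> closed_nbhd V E a \<longleftrightarrow> x = a \<or> E a x"
  using edge_vertices by (auto simp: closed_nbhd_def)

definition attachment :: "'a \<Rightarrow> 'a set \<Rightarrow> 'a set" where
  "attachment a C = {y. E a y \<and> (\<exists>c\<in>C. E c y)}"

lemma attachment_subset: "attachment a C \<subseteq> closed_nbhd V E a"
  by (auto simp: attachment_def closed_nbhd_iff)

lemma attachment_subset_vertices: "attachment a C \<subseteq> V"
  using edge_vertices by (auto simp: attachment_def)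

text \<open>The hypothesis \<open>closed\<close> below says that \<open>C\<close> is a union of components of \<open>G \ N[a]\<close>.\<close>

lemma neighbour_of_closed_set:
  assumes "C \<subseteq> V - closed_nbhd V E a"
    and closed: "\<forall>c\<in>C. \<forall>w\<in>V - closed_nbhd V E a. E c w \<longrightarrow> w \<in> C"
    and "c \<in> C" "E c w"
  shows "w \<in> C \<union> attachment a C"
proof (cases "E a w")
  case True
  then show ?thesis
    using assms(3,4) by (auto simp: attachment_def)
next
  case False
  moreover have "w \<noteq> a" "w \<in> V"
    using assms(1,3,4) edge_sym edge_vertices by (auto simp: closed_nbhd_iff)
  ultimately have "w \<in> V - closed_nbhd V E a"
    by (simp add: closed_nbhd_iff)
  then show ?thesis
    using closed assms(3,4) by blast
qed

lemma attachment_nonempty: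
  assumes "connected_on E V" "a \<in> V" "C \<noteq> {}" "C \<subseteq> V - closed_nbhd V E a"
    and closed: "\<forall>c\<in>C. \<forall>w\<in>V - closed_nbhd V E a. E c w \<longrightarrow> w \<in> C"
  shows "attachment a C \<noteq> {}"
proof
  assume empty: "attachment a C = {}"
  obtain c where c: "c \<in> C"
    using assms(3) by blast
  have "(\<lambda>u v. u \<in> V \<and> v \<in> V \<and> E u v)\<^sup>*\<^sup>* c a"
    using assms(1,2,4) c unfolding connected_on_def by blast
  then have "a \<in> C"
    by (rule rtranclp_closed_set)
      (use c neighbour_of_closed_set[OF assms(4) closed] empty in auto)
  then show False
    using assms(4) by (auto simp: closed_nbhd_iff)
qed

end

locale bipartite_graph = simple_graph +
  fixes A B :: "'a set"
  assumes bipartition: "bipartition V E A B"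
begin

lemma sides_cover: "A \<union> B = V"
  using bipartition unfolding bipartition_def by blast

lemma sides_disjoint: "A \<inter> B = {}"
  using bipartition unfolding bipartition_def by blast

lemma edge_sides: "E x y \<Longrightarrow> (x \<in> A \<and> y \<in> B) \<or> (x \<in> B \<and> y \<in> A)"
  using bipartition unfolding bipartition_def by blast

lemma no_edge_in_A: "x \<in> A \<Longrightarrow> y \<in> A \<Longrightarrow> \<not> E x y"
  using bipartition unfolding bipartition_def by blast

definition far_connected :: "'a \<Rightarrow> 'a set \<Rightarrow> bool" where
  "far_connected a C \<longleftrightarrow> a \<in> A \<and> C \<noteq> {} \<and> C \<subseteq> V - closed_nbhd V E a \<and> connected_on E C"

lemma obtain_max_far_connected:
  assumes "far_connected a\<^sub>0 C\<^sub>0"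
  obtains a C where "far_connected a C"
    and "\<And>a' C'. far_connected a' C' \<Longrightarrow> card C' \<le> card C"
proof -
  let ?P = "\<lambda>p. far_connected (fst p) (snd p)"
  have "card (snd p) < Suc (card V)" if "?P p" for p
    using that card_mono[OF finite_vertices] unfolding far_connected_def by (auto intro: le_imp_less_Suc)
  then have "\<exists>p. ?P p \<and> (\<forall>q. ?P q \<longrightarrow> card (snd q) \<le> card (snd p))"
    using assms by (intro ex_has_greatest_nat[where k = "(a\<^sub>0, C\<^sub>0)" and b = "Suc (card V)"]) auto
  then obtain p where "?P p" "\<forall>q. ?P q \<longrightarrow> card (snd q) \<le> card (snd p)"
    by blast
  then show ?thesis
    using that[of "fst p" "snd p"] by fastforce
qed

context
  fixes a C
  assumes far: "far_connected a C"
    and max: "\<And>a' C'. far_connected a' C' \<Longrightarrow> card C' \<le> card C"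
begin

lemma max_far_connected_finite: "finite C"
  using far finite_vertices finite_subset unfolding far_connected_def by blast

lemma max_far_connected_closed:
  assumes "c \<in> C" "w \<in> V - closed_nbhd V E a" "E c w"
  shows "w \<in> C"
proof (rule ccontr)
  assume "w \<notin> C"
  have "far_connected a (insert w C)"
    using far assms connected_on_insert[OF _ assms(1,3) edge_sym[OF assms(3)]]
    unfolding far_connected_def by auto
  then show False
    using max \<open>w \<notin> C\<close> max_far_connected_finite by fastforce
qed

lemma max_far_connected_complete:
  assumes "d \<in> A" "d \<in> V - closed_nbhd V E a - C" "y \<in> attachment a C"
  shows "E d y"
proof (rule ccontr)
  assume "\<not> E d y"
  obtain c where c: "c \<in> C" "E c y" and ay: "E a y"
    using assms(3) unfolding attachment_def by blast
  have a: "a \<in> A" "a \<notin> C"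
    using far unfolding far_connected_def by (auto simp: closed_nbhd_iff)
  have y: "y \<notin> C" "y \<noteq> a"
    using far ay edge_irrefl unfolding far_connected_def by (auto simp: closed_nbhd_iff)
  have "\<not> E d c'" if "c' \<in> C" for c'
    using max_far_connected_closed[OF that _ edge_sym] assms(2) by blast
  moreover have "connected_on E (insert a (insert y C))"
    using connected_on_insert[OF connected_on_insert[OF _ c edge_sym[OF c(2)]] _ edge_sym[OF ay] ay] far
    unfolding far_connected_def by simp
  ultimately have "far_connected d (insert a (insert y C))"
    using far assms(1,2) a ay \<open>\<not> E d y\<close> no_edge_in_A edge_vertices
    unfolding far_connected_def by (auto simp: closed_nbhd_iff)
  then show False
    using max a(2) y max_far_connected_finite by fastforce
qed

end

lemma attachment_subset_B:
  assumes "a \<in> A"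
  shows "attachment a C \<subseteq> B"
  using assms edge_sides sides_disjoint by (fastforce simp: attachment_def)

lemma attachment_cut_edges:
  assumes a: "a \<in> A" and C: "C \<subseteq> V - closed_nbhd V E a"
    and closed: "\<forall>c\<in>C. \<forall>w\<in>V - closed_nbhd V E a. E c w \<longrightarrow> w \<in> C"
    and complete: "\<forall>d\<in>A \<inter> (V - closed_nbhd V E a - C). \<forall>y\<in>attachment a C. E d y"
    and x: "x \<in> C \<union> attachment a C" and y: "y \<in> V - (C \<union> attachment a C)"
  shows "E x y \<longleftrightarrow> x \<in> attachment a C \<and> y \<in> A"
proof (cases "x \<in> C")
  case True
  have "\<not> E x y"
    using neighbour_of_closed_set[OF C closed True] y by blast
  moreover have "x \<notin> attachment a C"
    using True C attachment_subset by blast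
  ultimately show ?thesis
    by blast
next
  case False
  then have xY: "x \<in> attachment a C"
    using x by blast
  have "E x y" if "y \<in> A"
  proof (cases "y = a")
    case True
    then show ?thesis
      using xY edge_sym by (simp add: attachment_def)
  next
    case False
    then have "y \<in> A \<inter> (V - closed_nbhd V E a - C)"
      using y \<open>y \<in> A\<close> no_edge_in_A[OF a] by (simp add: closed_nbhd_iff)
    then show ?thesis
      using complete xY edge_sym by blast
  qed
  moreover have "y \<in> A" if "E x y"
    using edge_sides[OF that] attachment_subset_B[OF a] xY sides_disjoint by blast
  ultimately show ?thesis
    using xY by blast
qed

lemma component_1_join:
  assumes "connected_on E V" and a: "a \<in> A" and "C \<noteq> {}" and C: "C \<subseteq> V - closed_nbhd V E a"
    and closed: "\<forall>c\<in>C. \<forall>w\<in>V - closed_nbhd V E a. E c w \<longrightarrow> w \<in> C"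
    and d: "d \<in> V - closed_nbhd V E a - C"
    and complete: "\<forall>d\<in>A \<inter> (V - closed_nbhd V E a - C). \<forall>y\<in>attachment a C. E d y"
  shows "is_1_join V E (C \<union> attachment a C) (V - (C \<union> attachment a C))"
proof -
  let ?Y = "attachment a C"
  have "a \<in> V"
    using a sides_cover by blast
  have finite_Y: "finite ?Y" and finite_C: "finite C"
    using attachment_subset_vertices C finite_vertices finite_subset by blast+
  have "card C > 0" "card ?Y > 0"
    using assms(3) attachment_nonempty[OF assms(1) \<open>a \<in> V\<close> assms(3) C closed] finite_C finite_Y
    by (simp_all add: card_gt_0_iff)
  moreover have "C \<inter> ?Y = {}"
    using C attachment_subset by blast
  ultimately have "card (C \<union> ?Y) \<ge> 2"
    using card_Un_disjoint[OF finite_C finite_Y] by simp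
  moreover have "card (V - (C \<union> ?Y)) \<ge> 2"
  proof -
    have "a \<noteq> d" and sub: "{a, d} \<subseteq> V - (C \<union> ?Y)"
      using \<open>a \<in> V\<close> C d edge_irrefl by (auto simp: closed_nbhd_iff attachment_def)
    then have "card {a, d} = 2"
      by simp
    then show ?thesis
      using card_mono[OF finite_Diff[OF finite_vertices] sub] by linarith
  qed
  moreover have "C \<union> ?Y \<union> (V - (C \<union> ?Y)) = V"
    using attachment_subset_vertices C by blast
  ultimately show ?thesis
    unfolding is_1_join_def using attachment_cut_edges[OF a C closed complete]
    by (intro conjI exI[of _ ?Y] exI[of _ "(V - (C \<union> ?Y)) \<inter> A"] ballI) auto
qed

end

theorem mainTheorem19:
  fixes V :: "'a set" and E :: "'a \<Rightarrow> 'a \<Rightarrow> bool" and A B :: "'a set"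
  assumes "graph V E"
    and "connected_on E V"
    and "bipartition V E A B"
    and "card A \<ge> 2" and "card B \<ge> 2"
    and "\<not> admits_1_join V E"
  shows "\<exists>a\<in>A. connected_on E (V - closed_nbhd V E a)"
proof (rule ccontr)
  interpret bipartite_graph V E A B
    using assms(1,3) by unfold_locales
  assume "\<not> ?thesis"
  then have disconnected: "\<not> connected_on E (V - closed_nbhd V E a)" if "a \<in> A" for a
    using that by blast
  have "A \<noteq> {}"
    using assms(4) by auto
  then obtain a\<^sub>0 where "a\<^sub>0 \<in> A"
    by blast
  moreover obtain v where "v \<in> V - closed_nbhd V E a\<^sub>0"
    using disconnected[OF \<open>a\<^sub>0 \<in> A\<close>] unfolding connected_on_def by blast
  ultimately have "far_connected a\<^sub>0 {v}"
    unfolding far_connected_def by (simp add: connected_on_singleton)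
  then obtain a C where far: "far_connected a C"
    and max: "\<And>a' C'. far_connected a' C' \<Longrightarrow> card C' \<le> card C"
    using obtain_max_far_connected by blast
  then have a: "a \<in> A" and C: "C \<noteq> {}" "C \<subseteq> V - closed_nbhd V E a"
    and "C \<noteq> V - closed_nbhd V E a"
    using disconnected unfolding far_connected_def by auto
  then obtain d where d: "d \<in> V - closed_nbhd V E a - C"
    by blast
  have "is_1_join V E (C \<union> attachment a C) (V - (C \<union> attachment a C))"
    using max_far_connected_closed[OF far max] max_far_connected_complete[OF far max]
    by (intro component_1_join[OF assms(2) a C _ d] ballI impI) auto
  then show False
    using assms(6) unfolding admits_1_join_def by blast
qed

end
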